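(* Let $n\ge2$. For any sign string $\sigma$, the closure of $L^n_\sigma$ in $\mathbb{R}^n$ satisfies $\overline{L^n_\sigma}=L^n_\sigma\cup\bigcup_{|\tau|>|\sigma|}L^n_\tau$, the union over sign strings $\tau$. In particular, for $m\ge2$, $\overline{L^n_{\sigma^m}}\cap\overline{L^n_{-\sigma^m}}=\bigcup_{|\tau|>m}L^n_\tau$.
   Context: Write $[n]=\{1,\dots,n\}$ and identify the signs $+,-$ with $+1,-1$. For $m\ge2$, $\sigma^m(j)=(-1)^j$ and $(-\sigma^m)(j)=(-1)^{j+1}$ for $j\in[m]$. A sign string is a function $\pm\sigma^m$, $m\ge2$, of length $|\sigma|=m$. An interval in $[n]$ is a set of consecutive integers; $J<J'$ means every element of $J$ is smaller than every element of $J'$. For $x\in\mathbb{R}^n$ let $t(x)=\min\{x_k-x_{k'}: k\text{ odd},\ k'\text{ even}\}$; $x$ is level if $t(x)=0$, and then $e(x)$ is the unique real with $x_k=e(x)=x_{k'}$ for some odd $k$ and even $k'$. A level point $x$ is of type $\sigma$ if there exist nonempty intervals $J_1<\dots<J_{|\sigma|}$ covering $[n]$ such that each $J_j$ contains some $k$ with $x_k=e(x)$, and $(-1)^k=\sigma(j)$ for all $k\in J_j$ with $x_k=e(x)$. $L^n_\sigma$ is the set of level points of type $\sigma$ in $\mathbb{R}^n$. *)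

theory Defs
  imports "HOL-Analysis.Analysis"
begin

text \<open>Points of R^n are represented as functions x :: nat => real vanishing
outside [n] = {1..n}; the ambient space nat => real carries the product
topology (HOL-Analysis Function_Topology), in which Rn n is a closed subspace
homeomorphic to Euclidean R^n, so closure agrees with closure in R^n.\<close>

definition Rn :: "nat \<Rightarrow> (nat \<Rightarrow> real) set" where
  "Rn n = {x. \<forall>k. k \<notin> {1..n} \<longrightarrow> x k = 0}"

text \<open>Sign string s * sigma^m, with s in {1,-1}: j |-> s * (-1)^j on [m].\<close>
definition sstr :: "int \<Rightarrow> nat \<Rightarrow> int" where
  "sstr s j = s * (-1) ^ j"

definition tval :: "nat \<Rightarrow> (nat \<Rightarrow> real) \<Rightarrow> real" where
  "tval n x = Min {x k - x k' | k k'. k \<in> {1..n} \<and> odd k \<and> k' \<in> {1..n} \<and> even k'}"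

definition level :: "nat \<Rightarrow> (nat \<Rightarrow> real) \<Rightarrow> bool" where
  "level n x \<longleftrightarrow> tval n x = 0"

definition eval_level :: "nat \<Rightarrow> (nat \<Rightarrow> real) \<Rightarrow> real" where
  "eval_level n x = (THE e. \<exists>k k'. k \<in> {1..n} \<and> odd k \<and> k' \<in> {1..n} \<and> even k' \<and>
                           x k = e \<and> x k' = e)"

definition is_interval_nat :: "nat set \<Rightarrow> bool" where
  "is_interval_nat J \<longleftrightarrow> (\<forall>a\<in>J. \<forall>b\<in>J. \<forall>c. a \<le> c \<and> c \<le> b \<longrightarrow> c \<in> J)"

definition of_type :: "nat \<Rightarrow> int \<Rightarrow> nat \<Rightarrow> (nat \<Rightarrow> real) \<Rightarrow> bool" where
  "of_type n s m x \<longleftrightarrow>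
     (\<exists>J :: nat \<Rightarrow> nat set.
        (\<forall>j\<in>{1..m}. J j \<noteq> {} \<and> is_interval_nat (J j)) \<and>
        (\<forall>j\<in>{1..m}. \<forall>j'\<in>{1..m}. j < j' \<longrightarrow> (\<forall>a\<in>J j. \<forall>b\<in>J j'. a < b)) \<and>
        (\<Union>j\<in>{1..m}. J j) = {1..n} \<and>
        (\<forall>j\<in>{1..m}. (\<exists>k\<in>J j. x k = eval_level n x) \<and>
                     (\<forall>k\<in>J j. x k = eval_level n x \<longrightarrow> (-1::int) ^ k = sstr s j)))"

text \<open>L^n_sigma for sigma = s * sigma^m (s in {1,-1}, m >= 2).\<close>
definition Lset :: "nat \<Rightarrow> int \<Rightarrow> nat \<Rightarrow> (nat \<Rightarrow> real) set" where
  "Lset n s m = {x \<in> Rn n. level n x \<and> of_type n s m x}"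

end

theory Submission
  imports Defs
begin

text \<open>Whether a level point x lies in L_sigma depends only on its level set
T = {k. x_k = e(x)}: grouping T into maximal runs of equal parity, |sigma| is the number of
runs and sigma(1) the parity of the first one. Near a level point y every level point has
a level set contained in that of y, and a subset has at most as many runs as the whole set,
with the same first sign when the run counts agree; this bounds the closure from above.
Conversely, a level set with more runs than |sigma| contains a subset of type sigma, and
pushing the odd coordinates outside that subset up and the even ones down by epsilon gives
points of L_sigma converging to the given point.\<close>

section \<open>Types of level sets\<close>

definition interval_partition :: "nat \<Rightarrow> nat \<Rightarrow> (nat \<Rightarrow> nat set) \<Rightarrow> bool" where
  "interval_partition n m J \<longleftrightarrow> (\<forall>j\<in>{1..m}. J j \<noteq> {} \<and> is_interval_nat (J j)) \<and>
     (\<forall>j\<in>{1..m}. \<forall>j'\<in>{1..m}. j < j' \<longrightarrow> (\<forall>a\<in>J j. \<forall>b\<in>J j'. a < b)) \<and>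
     (\<Union>j\<in>{1..m}. J j) = {1..n}"

definition has_type :: "nat \<Rightarrow> int \<Rightarrow> nat \<Rightarrow> nat set \<Rightarrow> bool" where
  "has_type n s m T \<longleftrightarrow> (\<exists>J. interval_partition n m J \<and>
     (\<forall>j\<in>{1..m}. (\<exists>k\<in>J j. k \<in> T) \<and> (\<forall>k\<in>J j. k \<in> T \<longrightarrow> (-1::int) ^ k = sstr s j)))"

definition block_index :: "nat \<Rightarrow> (nat \<Rightarrow> nat set) \<Rightarrow> nat \<Rightarrow> nat" where
  "block_index m J k = (THE i. i \<in> {1..m} \<and> k \<in> J i)"

lemma of_type_iff_has_type: "of_type n s m x \<longleftrightarrow> has_type n s m {k. x k = eval_level n x}"
  unfolding of_type_def has_type_def interval_partition_def by simp

lemma sstr_Suc: "sstr s (Suc j) = - sstr s j"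
  unfolding sstr_def by simp

lemma sstr_sign: "s \<in> {1,-1} \<Longrightarrow> sstr s j \<in> {1,-1}"
  unfolding sstr_def by (auto simp: minus_one_power_iff)

lemma sstr_Suc_neq: "s \<in> {1,-1} \<Longrightarrow> sstr s (Suc j) \<noteq> sstr s j"
  using sstr_sign[of s j] by (auto simp: sstr_Suc)

lemma sstr_eq_shift:
  assumes "s \<in> {1,-1}" "s' \<in> {1,-1}"
  obtains i0 where "i0 \<le> 1" "\<And>j. sstr s j = sstr s' (j + i0)"
proof (cases "s = s'")
  case True
  then show ?thesis using that[of 0] by simp
next
  case False
  then have "s = - s'" using assms by auto
  then show ?thesis using that[of 1] by (simp add: sstr_def)
qed

lemma sign_neq_eq_neg: "a \<in> {1,-1} \<Longrightarrow> b \<in> {1,-1} \<Longrightarrow> a \<noteq> b \<Longrightarrow> (a::int) = - b"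
  by auto

lemma interval_partition_subset:
  "interval_partition n m J \<Longrightarrow> j \<in> {1..m} \<Longrightarrow> J j \<subseteq> {1..n}"
  unfolding interval_partition_def by blast

lemma interval_partition_less:
  "interval_partition n m J \<Longrightarrow> j \<in> {1..m} \<Longrightarrow> j' \<in> {1..m} \<Longrightarrow> j < j' \<Longrightarrow>
    a \<in> J j \<Longrightarrow> b \<in> J j' \<Longrightarrow> a < b"
  unfolding interval_partition_def by blast

lemma has_type_restrict: "has_type n s m T \<longleftrightarrow> has_type n s m (T \<inter> {1..n})"
proof -
  have "k \<in> T \<longleftrightarrow> k \<in> T \<inter> {1..n}" if "interval_partition n m J" "j \<in> {1..m}" "k \<in> J j" for J j k
    using interval_partition_subset[OF that(1,2)] that(3) by blast
  then show ?thesis unfolding has_type_def by (metis (no_types, lifting))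
qed

lemma block_index_eq:
  assumes J: "interval_partition n m J" and "i \<in> {1..m}" "k \<in> J i"
  shows "block_index m J k = i"
  unfolding block_index_def
proof (rule the_equality)
  fix i' assume "i' \<in> {1..m} \<and> k \<in> J i'"
  with assms show "i' = i"
    using interval_partition_less[OF J, of i' i k k] interval_partition_less[OF J, of i i' k k]
    by (metis less_irrefl nat_neq_iff)
qed (use assms in simp)

lemma block_index_in:
  assumes J: "interval_partition n m J" and "k \<in> {1..n}"
  shows "block_index m J k \<in> {1..m} \<and> k \<in> J (block_index m J k)"
proof -
  obtain i where "i \<in> {1..m}" "k \<in> J i"
    using assms unfolding interval_partition_def by blast
  then show ?thesis using block_index_eq[OF J] by simp
qed

lemma block_index_mono:
  assumes J: "interval_partition n m J" and "a \<in> {1..n}" "b \<in> {1..n}" "a \<le> b"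
  shows "block_index m J a \<le> block_index m J b"
  using interval_partition_less[OF J, of "block_index m J b" "block_index m J a" b a]
    block_index_in[OF J] assms by force

lemma interval_partition_last:
  assumes J: "interval_partition n m J" and "m \<ge> 1" "n \<ge> 1"
  shows "n \<in> J m"
proof -
  obtain b where b: "b \<in> J m" using J \<open>m \<ge> 1\<close> unfolding interval_partition_def by fastforce
  then have "b \<in> {1..n}" using interval_partition_subset[OF J, of m] \<open>m \<ge> 1\<close> by auto
  then have "m \<le> block_index m J n"
    using block_index_mono[OF J, of b n] block_index_eq[OF J _ b] \<open>m \<ge> 1\<close> \<open>n \<ge> 1\<close> by auto
  moreover have "block_index m J n \<in> {1..m}" "n \<in> J (block_index m J n)"
    using block_index_in[OF J, of n] \<open>n \<ge> 1\<close> by auto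
  ultimately show ?thesis by (metis atLeastAtMost_iff le_antisym)
qed

lemma interval_partition_append:
  assumes J: "interval_partition n m J"
  defines "J' \<equiv> J(Suc m := {Suc n})"
  shows "interval_partition (Suc n) (Suc m) J'"
  unfolding interval_partition_def
proof (intro conjI)
  have old: "J' j = J j" "J j \<noteq> {}" "is_interval_nat (J j)" "J j \<subseteq> {1..n}" if "j \<in> {1..m}" for j
    using J that interval_partition_subset[OF J that] unfolding interval_partition_def J'_def by auto
  have new: "J' (Suc m) = {Suc n}" unfolding J'_def by simp
  have cases_j: "j \<in> {1..m} \<or> j = Suc m" if "j \<in> {1..Suc m}" for j
    using that by auto
  show "\<forall>j\<in>{1..Suc m}. J' j \<noteq> {} \<and> is_interval_nat (J' j)"
    using old new cases_j by (metis empty_not_insert is_interval_nat_def singletonD singletonI le_antisym)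
  show "\<forall>j\<in>{1..Suc m}. \<forall>j'\<in>{1..Suc m}. j < j' \<longrightarrow> (\<forall>a\<in>J' j. \<forall>b\<in>J' j'. a < b)"
  proof (intro ballI impI)
    fix j j' a b assume "j \<in> {1..Suc m}" "j' \<in> {1..Suc m}" "j < j'" "a \<in> J' j" "b \<in> J' j'"
    then have j: "j \<in> {1..m}" and a: "a \<in> J j" using old by auto
    show "a < b"
    proof (cases "j' = Suc m")
      case True
      then show ?thesis using \<open>b \<in> J' j'\<close> new old(4)[OF j] a by auto
    next
      case False
      then show ?thesis
        using \<open>j' \<in> {1..Suc m}\<close> \<open>j < j'\<close> \<open>b \<in> J' j'\<close> old(1) j a
          interval_partition_less[OF J, of j j' a b] by auto
    qed
  qed
  show "(\<Union>j\<in>{1..Suc m}. J' j) = {1..Suc n}"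
  proof -
    have "(\<Union>j\<in>{1..Suc m}. J' j) = (\<Union>j\<in>{1..m}. J j) \<union> {Suc n}"
      using old new by (simp add: atLeastAtMostSuc_conv)
    then show ?thesis using J unfolding interval_partition_def by auto
  qed
qed

lemma is_interval_nat_insert_Suc:
  assumes "is_interval_nat A" "A \<subseteq> {1..n}" "n \<in> A"
  shows "is_interval_nat (insert (Suc n) A)"
  unfolding is_interval_nat_def
proof (intro ballI allI impI)
  fix a b c assume a: "a \<in> insert (Suc n) A" and b: "b \<in> insert (Suc n) A" and c: "a \<le> c \<and> c \<le> b"
  show "c \<in> insert (Suc n) A"
  proof (cases "c = Suc n")
    case False
    with b c assms(2) have "c \<le> n" by auto
    with a c assms(2) have "a \<in> A" by auto
    with assms(1,3) c \<open>c \<le> n\<close> have "c \<in> A" unfolding is_interval_nat_def by blast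
    then show ?thesis by simp
  qed simp
qed

lemma interval_partition_extend_last:
  assumes J: "interval_partition n m J" and "m \<ge> 1" "n \<ge> 1"
  defines "J' \<equiv> J(m := insert (Suc n) (J m))"
  shows "interval_partition (Suc n) m J'"
  unfolding interval_partition_def
proof (intro conjI)
  have nonempty: "J j \<noteq> {}" and interval: "is_interval_nat (J j)" and sub: "J j \<subseteq> {1..n}"
    if "j \<in> {1..m}" for j
    using J that interval_partition_subset[OF J that] unfolding interval_partition_def by auto
  have "n \<in> J m" using interval_partition_last[OF assms(1-3)] .
  have "is_interval_nat (insert (Suc n) (J m))"
    by (rule is_interval_nat_insert_Suc) (use interval[of m] sub[of m] \<open>n \<in> J m\<close> \<open>m \<ge> 1\<close> in auto)
  then show "\<forall>j\<in>{1..m}. J' j \<noteq> {} \<and> is_interval_nat (J' j)"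
    using nonempty interval unfolding J'_def by simp
  show "\<forall>j\<in>{1..m}. \<forall>j'\<in>{1..m}. j < j' \<longrightarrow> (\<forall>a\<in>J' j. \<forall>b\<in>J' j'. a < b)"
  proof (intro ballI impI)
    fix j j' a b assume jj': "j \<in> {1..m}" "j' \<in> {1..m}" "j < j'" and "a \<in> J' j" "b \<in> J' j'"
    have "a \<in> J j" using \<open>a \<in> J' j\<close> \<open>j < j'\<close> \<open>j' \<in> {1..m}\<close> unfolding J'_def by auto
    show "a < b"
    proof (cases "b = Suc n")
      case False
      then have "b \<in> J j'" using \<open>b \<in> J' j'\<close> unfolding J'_def by (auto split: if_splits)
      then show ?thesis using interval_partition_less[OF J] \<open>a \<in> J j\<close> jj' by blast
    qed (use sub[of j] \<open>a \<in> J j\<close> \<open>j \<in> {1..m}\<close> in auto)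
  qed
  have "(\<Union>j\<in>{1..m}. J' j) = insert (Suc n) (\<Union>j\<in>{1..m}. J j)"
    using \<open>m \<ge> 1\<close> unfolding J'_def by (force split: if_splits)
  then show "(\<Union>j\<in>{1..m}. J' j) = {1..Suc n}"
    using J unfolding interval_partition_def by auto
qed

lemma has_type_Suc_extend:
  assumes T: "has_type n s m T" and "m \<ge> 1" "n \<ge> 1"
    and sign: "Suc n \<in> T \<Longrightarrow> (-1) ^ Suc n = sstr s m"
  shows "has_type (Suc n) s m T"
proof -
  obtain J where J: "interval_partition n m J"
    and JT: "\<forall>j\<in>{1..m}. (\<exists>k\<in>J j. k \<in> T) \<and> (\<forall>k\<in>J j. k \<in> T \<longrightarrow> (-1::int) ^ k = sstr s j)"
    using T unfolding has_type_def by blast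
  define J' where "J' = J(m := insert (Suc n) (J m))"
  have "interval_partition (Suc n) m J'"
    unfolding J'_def using interval_partition_extend_last[OF J assms(2,3)] .
  moreover have "(\<exists>k\<in>J' j. k \<in> T) \<and> (\<forall>k\<in>J' j. k \<in> T \<longrightarrow> (-1::int) ^ k = sstr s j)"
    if j: "j \<in> {1..m}" for j
  proof -
    have "J j \<subseteq> J' j" unfolding J'_def by auto
    moreover have "(-1::int) ^ k = sstr s j" if "k \<in> J' j" "k \<in> T" for k
    proof (cases "k = Suc n")
      case True
      then have "j = m"
        using that interval_partition_subset[OF J j] unfolding J'_def by (auto split: if_splits)
      then show ?thesis using sign that True by simp
    next
      case False
      then have "k \<in> J j" using that unfolding J'_def by (auto split: if_splits)
      then show ?thesis using JT j that by blast
    qed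
    ultimately show ?thesis using JT j by blast
  qed
  ultimately show ?thesis unfolding has_type_def by blast
qed

lemma has_type_Suc_append:
  assumes T: "has_type n s m T" and "Suc n \<in> T" and sign: "(-1) ^ Suc n = sstr s (Suc m)"
  shows "has_type (Suc n) s (Suc m) T"
proof -
  obtain J where J: "interval_partition n m J"
    and JT: "\<forall>j\<in>{1..m}. (\<exists>k\<in>J j. k \<in> T) \<and> (\<forall>k\<in>J j. k \<in> T \<longrightarrow> (-1::int) ^ k = sstr s j)"
    using T unfolding has_type_def by blast
  define J' where "J' = J(Suc m := {Suc n})"
  have "interval_partition (Suc n) (Suc m) J'"
    unfolding J'_def using interval_partition_append[OF J] .
  moreover have "(\<exists>k\<in>J' j. k \<in> T) \<and> (\<forall>k\<in>J' j. k \<in> T \<longrightarrow> (-1::int) ^ k = sstr s j)"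
    if "j \<in> {1..Suc m}" for j
  proof (cases "j = Suc m")
    case True
    then show ?thesis using \<open>Suc n \<in> T\<close> sign unfolding J'_def by simp
  next
    case False
    then have "j \<in> {1..m}" "J' j = J j" using that unfolding J'_def by auto
    then show ?thesis using JT by simp
  qed
  ultimately show ?thesis unfolding has_type_def by blast
qed

lemma has_type_exists:
  assumes "T \<subseteq> {1..n}" "T \<noteq> {}"
  shows "\<exists>s m. s \<in> {1,-1} \<and> m \<ge> 1 \<and> has_type n s m T"
  using assms
proof (induction n arbitrary: T)
  case 0
  then show ?case by auto
next
  case (Suc n)
  show ?case
  proof (cases "T = {Suc n}")
    case True
    have "interval_partition (Suc n) 1 (\<lambda>_. {1..Suc n})"
      by (simp add: interval_partition_def is_interval_nat_def)
    then have "has_type (Suc n) (- ((-1) ^ Suc n)) 1 T"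
      unfolding has_type_def True by (intro exI[of _ "\<lambda>_. {1..Suc n}"]) (simp add: sstr_def)
    moreover have "- ((-1::int) ^ Suc n) \<in> {1,-1}" by (simp add: minus_one_power_iff)
    ultimately show ?thesis by (metis le_refl)
  next
    case False
    then have "T - {Suc n} \<subseteq> {1..n}" "T - {Suc n} \<noteq> {}" using Suc.prems by auto
    with Suc.IH obtain s m where s: "s \<in> {1,-1}" and "m \<ge> 1" and "has_type n s m (T - {Suc n})"
      by blast
    moreover have "(T - {Suc n}) \<inter> {1..n} = T \<inter> {1..n}" by auto
    ultimately have T: "has_type n s m T" using has_type_restrict by metis
    have "n \<ge> 1" using \<open>T - {Suc n} \<subseteq> {1..n}\<close> \<open>T - {Suc n} \<noteq> {}\<close> by auto
    show ?thesis
    proof (cases "Suc n \<in> T \<and> (-1) ^ Suc n \<noteq> sstr s m")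
      case True
      then have "(-1) ^ Suc n = sstr s (Suc m)"
      proof -
        have "(-1::int) ^ Suc n \<in> {1,-1}" by (simp add: minus_one_power_iff)
        then show ?thesis
          using sign_neq_eq_neg sstr_sign[OF s, of m] True unfolding sstr_Suc by blast
      qed
      then have "has_type (Suc n) s (Suc m) T" using has_type_Suc_append[OF T] True by blast
      moreover have "Suc m \<ge> 1" by simp
      ultimately show ?thesis using s by blast
    next
      case False
      then show ?thesis using has_type_Suc_extend[OF T \<open>m \<ge> 1\<close> \<open>n \<ge> 1\<close>] s \<open>m \<ge> 1\<close> by blast
    qed
  qed
qed

lemma strict_steps_growth:
  fixes f :: "nat \<Rightarrow> nat"
  assumes step: "\<And>j. 1 \<le> j \<Longrightarrow> Suc j \<le> m \<Longrightarrow> f j < f (Suc j)"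
  shows "1 \<le> j \<Longrightarrow> j \<le> m \<Longrightarrow> f 1 + (j - 1) \<le> f j"
proof (induction j)
  case (Suc j)
  show ?case
  proof (cases "j = 0")
    case False
    then show ?thesis using Suc step[of j] by fastforce
  qed simp
qed simp

lemma has_type_mono:
  assumes T: "has_type n s m T" and T': "has_type n s' m' T'"
    and sub: "T \<inter> {1..n} \<subseteq> T'" and "m \<ge> 1" and s: "s \<in> {1,-1}"
  shows "m < m' \<or> (m = m' \<and> s = s')"
proof -
  obtain J where J: "interval_partition n m J"
    and JT: "\<forall>j\<in>{1..m}. (\<exists>k\<in>J j. k \<in> T) \<and> (\<forall>k\<in>J j. k \<in> T \<longrightarrow> (-1::int) ^ k = sstr s j)"
    using T unfolding has_type_def by blast
  obtain J' where J': "interval_partition n m' J'"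
    and JT': "\<forall>j\<in>{1..m'}. \<forall>k\<in>J' j. k \<in> T' \<longrightarrow> (-1::int) ^ k = sstr s' j"
    using T' unfolding has_type_def by blast
  obtain t where t: "\<forall>j\<in>{1..m}. t j \<in> J j \<and> t j \<in> T"
    using JT by metis
  define ph where "ph j = block_index m' J' (t j)" for j
  have t_in: "t j \<in> {1..n}" if "j \<in> {1..m}" for j
    using t interval_partition_subset[OF J that] that by blast
  have ph: "ph j \<in> {1..m'}" "t j \<in> J' (ph j)" if "j \<in> {1..m}" for j
    using block_index_in[OF J' t_in[OF that]] unfolding ph_def by auto
  have sign: "sstr s j = sstr s' (ph j)" if "j \<in> {1..m}" for j
    using t JT JT' ph[OF that] that t_in[OF that] sub by fastforce
  have "ph j < ph (Suc j)" if "1 \<le> j" "Suc j \<le> m" for j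
  proof -
    have j: "j \<in> {1..m}" "Suc j \<in> {1..m}" using that by auto
    then have "t j < t (Suc j)" using interval_partition_less[OF J] t by auto
    then have "ph j \<le> ph (Suc j)" unfolding ph_def using block_index_mono[OF J'] t_in j by simp
    moreover have "ph j \<noteq> ph (Suc j)" using sign j sstr_Suc_neq[OF s, of j] by metis
    ultimately show ?thesis by simp
  qed
  then have "ph 1 + (m - 1) \<le> ph m" using strict_steps_growth[of m ph m] \<open>m \<ge> 1\<close> by simp
  moreover have "ph m \<le> m'" "1 \<le> ph 1" using ph \<open>m \<ge> 1\<close> by auto
  ultimately have "m \<le> m'" and "m = m' \<Longrightarrow> ph 1 = 1" by linarith+
  moreover have "m = m' \<Longrightarrow> s = s'"
    using sign[of 1] \<open>m \<ge> 1\<close> \<open>m = m' \<Longrightarrow> ph 1 = 1\<close> by (simp add: sstr_def)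
  ultimately show ?thesis by linarith
qed

lemma interval_partition_merge:
  assumes J: "interval_partition n m' J" and "mono g" and g_range: "\<And>i. g i \<in> {1..m}"
    and g_onto: "\<And>j. j \<in> {1..m} \<Longrightarrow> \<exists>i\<in>{1..m'}. g i = j"
  shows "interval_partition n m (\<lambda>j. {k \<in> {1..n}. g (block_index m' J k) = j})"
    (is "interval_partition n m ?K")
  unfolding interval_partition_def
proof (intro conjI ballI impI)
  have g_block_mono: "g (block_index m' J a) \<le> g (block_index m' J b)"
    if "a \<in> {1..n}" "b \<in> {1..n}" "a \<le> b" for a b
    using monoD[OF \<open>mono g\<close> block_index_mono[OF J that]] .
  fix j assume j: "j \<in> {1..m}"
  obtain i where i: "i \<in> {1..m'}" "g i = j" using g_onto[OF j] by blast
  obtain k where "k \<in> J i" using J i unfolding interval_partition_def by blast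
  then have "k \<in> ?K j" using i block_index_eq[OF J] interval_partition_subset[OF J i(1)] by auto
  then show "?K j \<noteq> {}" by blast
  show "is_interval_nat (?K j)"
    unfolding is_interval_nat_def
  proof (intro ballI allI impI)
    fix a b c assume "a \<in> ?K j" "b \<in> ?K j" "a \<le> c \<and> c \<le> b"
    moreover from this have "c \<in> {1..n}" by auto
    ultimately show "c \<in> ?K j" using g_block_mono[of a c] g_block_mono[of c b] by auto
  qed
  fix j' a b assume "j' \<in> {1..m}" "j < j'" "a \<in> ?K j" "b \<in> ?K j'"
  then show "a < b" using g_block_mono[of b a] by (cases "a < b") auto
next
  show "(\<Union>j\<in>{1..m}. ?K j) = {1..n}" using g_range by auto
qed

lemma has_type_coarsen:
  assumes T': "has_type n s' m' T'" and "s \<in> {1,-1}" "s' \<in> {1,-1}" and "1 \<le> m" "m < m'"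
  shows "\<exists>T \<subseteq> T' \<inter> {1..n}. has_type n s m T"
proof -
  obtain J' where J': "interval_partition n m' J'"
    and JT': "\<forall>j\<in>{1..m'}. (\<exists>k\<in>J' j. k \<in> T') \<and> (\<forall>k\<in>J' j. k \<in> T' \<longrightarrow> (-1::int) ^ k = sstr s' j)"
    using T' unfolding has_type_def by blast
  obtain i0 where "i0 \<le> 1" and shift: "\<And>j. sstr s j = sstr s' (j + i0)"
    using sstr_eq_shift assms(2,3) by blast
  define g where "g i = max 1 (min m (i - i0))" for i
  define J where "J = (\<lambda>j. {k \<in> {1..n}. g (block_index m' J' k) = j})"
  define T where "T = {k \<in> T' \<inter> {1..n}. block_index m' J' k \<in> {i0 + 1..i0 + m}}"
  have shifted: "j + i0 \<in> {1..m'}" "g (j + i0) = j" if "j \<in> {1..m}" for j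
    using that \<open>i0 \<le> 1\<close> \<open>m < m'\<close> unfolding g_def by auto
  have "mono g" unfolding g_def by (intro monoI) simp
  moreover have "g i \<in> {1..m}" for i unfolding g_def using \<open>1 \<le> m\<close> by simp
  ultimately have J: "interval_partition n m J"
    unfolding J_def by (rule interval_partition_merge[OF J']) (use shifted in blast)
  have "(\<exists>k\<in>J j. k \<in> T) \<and> (\<forall>k\<in>J j. k \<in> T \<longrightarrow> (-1::int) ^ k = sstr s j)" if j: "j \<in> {1..m}" for j
  proof (intro conjI ballI impI)
    have block_j: "block_index m' J' k = j + i0 \<longleftrightarrow> k \<in> J' (j + i0)" if "k \<in> {1..n}" for k
      using block_index_in[OF J' that] block_index_eq[OF J' shifted(1)[OF j], of k] by auto
    obtain k where "k \<in> J' (j + i0)" "k \<in> T'" using JT' shifted(1)[OF j] by blast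
    moreover from this have "k \<in> {1..n}" using interval_partition_subset[OF J' shifted(1)[OF j]] by auto
    ultimately have "block_index m' J' k = j + i0" using block_j by blast
    with \<open>k \<in> T'\<close> \<open>k \<in> {1..n}\<close> have "k \<in> J j" "k \<in> T"
      using shifted(2)[OF j] j unfolding J_def T_def by auto
    then show "\<exists>k\<in>J j. k \<in> T" by blast
    fix k assume "k \<in> J j" "k \<in> T"
    then have "k \<in> {1..n}" "k \<in> T'" "g (block_index m' J' k) = j" "block_index m' J' k \<in> {i0 + 1..i0 + m}"
      unfolding J_def T_def by auto
    then have "block_index m' J' k = j + i0" unfolding g_def by auto
    then have "k \<in> J' (j + i0)" using block_j \<open>k \<in> {1..n}\<close> by blast
    then have "(-1::int) ^ k = sstr s' (j + i0)"
      using bspec[OF JT' shifted(1)[OF j]] \<open>k \<in> T'\<close> by blast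
    then show "(-1::int) ^ k = sstr s j" using shift by simp
  qed
  then have "has_type n s m T" unfolding has_type_def using J by blast
  moreover have "T \<subseteq> T' \<inter> {1..n}" unfolding T_def by blast
  ultimately show ?thesis by blast
qed

lemma has_type_odd_even:
  assumes "has_type n s m T" and "m \<ge> 2" and s: "s \<in> {1,-1}"
  shows "\<exists>k\<in>T \<inter> {1..n}. \<exists>k'\<in>T \<inter> {1..n}. odd k \<and> even k'"
proof -
  obtain J where J: "interval_partition n m J"
    and JT: "\<forall>j\<in>{1..m}. (\<exists>k\<in>J j. k \<in> T) \<and> (\<forall>k\<in>J j. k \<in> T \<longrightarrow> (-1::int) ^ k = sstr s j)"
    using assms(1) unfolding has_type_def by blast
  have "1 \<in> {1..m}" "2 \<in> {1..m}" using \<open>m \<ge> 2\<close> by auto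
  then obtain a b where "a \<in> J 1" "a \<in> T" "b \<in> J 2" "b \<in> T"
    using JT by meson
  moreover have "(-1::int) ^ a = sstr s 1" "(-1::int) ^ b = sstr s 2"
    using bspec[OF JT \<open>1 \<in> {1..m}\<close>] bspec[OF JT \<open>2 \<in> {1..m}\<close>] calculation by auto
  then have "(-1::int) ^ a \<noteq> (-1) ^ b"
    using sstr_Suc_neq[OF s, of 1] by (simp add: numeral_2_eq_2)
  then have "odd a \<noteq> odd b" by (auto simp: minus_one_power_iff split: if_splits)
  ultimately show ?thesis
    using interval_partition_subset[OF J \<open>1 \<in> {1..m}\<close>] interval_partition_subset[OF J \<open>2 \<in> {1..m}\<close>]
    by (cases "odd a") auto
qed

section \<open>Level points and the closure of L_sigma\<close>

definition level_at :: "nat \<Rightarrow> (nat \<Rightarrow> real) \<Rightarrow> real \<Rightarrow> bool" where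
  "level_at n x e \<longleftrightarrow> (\<exists>k\<in>{1..n}. \<exists>k'\<in>{1..n}. odd k \<and> even k' \<and> x k = e \<and> x k' = e) \<and>
     (\<forall>k\<in>{1..n}. odd k \<longrightarrow> e \<le> x k) \<and> (\<forall>k\<in>{1..n}. even k \<longrightarrow> x k \<le> e)"

lemma finite_odd_even_differences:
  fixes x :: "nat \<Rightarrow> real"
  shows "finite {x k - x k' | k k'. k \<in> {1..n} \<and> odd k \<and> k' \<in> {1..n} \<and> even k'}"
proof (rule finite_subset)
  show "{x k - x k' | k k'. k \<in> {1..n} \<and> odd k \<and> k' \<in> {1..n} \<and> even k'}
      \<subseteq> (\<lambda>(k, k'). x k - x k') ` ({1..n} \<times> {1..n})"
    by auto
qed (intro finite_imageI finite_cartesian_product; simp)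

lemma odd_even_differences_nonempty:
  fixes x :: "nat \<Rightarrow> real"
  shows "n \<ge> 2 \<Longrightarrow> {x k - x k' | k k'. k \<in> {1..n} \<and> odd k \<and> k' \<in> {1..n} \<and> even k'} \<noteq> {}"
  by (rule ex_in_conv[THEN iffD1], rule exI[of _ "x 1 - x 2"]) force

lemma level_at_odd_ge: "level_at n x e \<Longrightarrow> k \<in> {1..n} \<Longrightarrow> odd k \<Longrightarrow> e \<le> x k"
  unfolding level_at_def by blast

lemma level_at_even_le: "level_at n x e \<Longrightarrow> k \<in> {1..n} \<Longrightarrow> even k \<Longrightarrow> x k \<le> e"
  unfolding level_at_def by blast

lemma eval_level_eq:
  assumes "level_at n x e"
  shows "eval_level n x = e"
  unfolding eval_level_def
proof (rule the_equality)
  show "\<exists>k k'. k \<in> {1..n} \<and> odd k \<and> k' \<in> {1..n} \<and> even k' \<and> x k = e \<and> x k' = e"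
    using assms unfolding level_at_def by blast
next
  fix e' assume "\<exists>k k'. k \<in> {1..n} \<and> odd k \<and> k' \<in> {1..n} \<and> even k' \<and> x k = e' \<and> x k' = e'"
  then obtain k k' where "k \<in> {1..n}" "odd k" "k' \<in> {1..n}" "even k'" "x k = e'" "x k' = e'"
    by blast
  then show "e' = e" using level_at_odd_ge[OF assms, of k] level_at_even_le[OF assms, of k'] by simp
qed

lemma level_iff_odd_even_differences:
  fixes x :: "nat \<Rightarrow> real"
  assumes "n \<ge> 2"
  defines "D \<equiv> {x k - x k' | k k'. k \<in> {1..n} \<and> odd k \<and> k' \<in> {1..n} \<and> even k'}"
  shows "level n x \<longleftrightarrow> 0 \<in> D \<and> (\<forall>d\<in>D. 0 \<le> d)"
  unfolding level_def tval_def D_def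
  using Min_eq_iff[OF finite_odd_even_differences odd_even_differences_nonempty[OF assms(1)]] by blast

lemma level_at_iff:
  assumes "n \<ge> 2"
  shows "level_at n x e \<longleftrightarrow> level n x \<and> eval_level n x = e"
proof
  assume e: "level_at n x e"
  then obtain k0 k0' where k0: "k0 \<in> {1..n}" "k0' \<in> {1..n}" "odd k0" "even k0'" "x k0 = e" "x k0' = e"
    unfolding level_at_def by blast
  have "x k0 - x k0' \<in> {x k - x k' | k k'. k \<in> {1..n} \<and> odd k \<and> k' \<in> {1..n} \<and> even k'}"
    using k0 by blast
  then have "0 \<in> {x k - x k' | k k'. k \<in> {1..n} \<and> odd k \<and> k' \<in> {1..n} \<and> even k'}"
    using k0(5,6) by simp
  moreover have "0 \<le> x k - x k'" if "k \<in> {1..n}" "odd k" "k' \<in> {1..n}" "even k'" for k k'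
    using level_at_odd_ge[OF e that(1,2)] level_at_even_le[OF e that(3,4)] by simp
  ultimately have "level n x"
    unfolding level_iff_odd_even_differences[OF assms] by blast
  then show "level n x \<and> eval_level n x = e" using eval_level_eq[OF e] by simp
next
  assume "level n x \<and> eval_level n x = e"
  then have "0 \<in> {x k - x k' | k k'. k \<in> {1..n} \<and> odd k \<and> k' \<in> {1..n} \<and> even k'}"
    and nonneg: "\<forall>d\<in>{x k - x k' | k k'. k \<in> {1..n} \<and> odd k \<and> k' \<in> {1..n} \<and> even k'}. 0 \<le> d"
    and ev: "eval_level n x = e"
    unfolding level_iff_odd_even_differences[OF assms] by auto
  then obtain k0 k0' where k0: "k0 \<in> {1..n}" "odd k0" "k0' \<in> {1..n}" "even k0'" "x k0 = x k0'"
    by auto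
  have le: "x k' \<le> x k" if "k \<in> {1..n}" "odd k" "k' \<in> {1..n}" "even k'" for k k'
  proof -
    have "x k - x k' \<in> {x k - x k' | k k'. k \<in> {1..n} \<and> odd k \<and> k' \<in> {1..n} \<and> even k'}"
      using that by blast
    then have "0 \<le> x k - x k'" using bspec[OF nonneg] by blast
    then show ?thesis by simp
  qed
  have "level_at n x (x k0)"
    unfolding level_at_def
  proof (intro conjI ballI impI)
    show "\<exists>k\<in>{1..n}. \<exists>k'\<in>{1..n}. odd k \<and> even k' \<and> x k = x k0 \<and> x k' = x k0"
      using k0 by (intro bexI[of _ k0] bexI[of _ k0']) auto
    show "x k0 \<le> x k" if "k \<in> {1..n}" "odd k" for k
      using le[OF that k0(3,4)] k0(5) by simp
    show "x k \<le> x k0" if "k \<in> {1..n}" "even k" for k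
      using le[OF k0(1,2) that] .
  qed
  then show "level_at n x e" using eval_level_eq ev by metis
qed

lemma closed_Rn: "closed (Rn n)"
proof -
  have "Rn n = (\<Inter>k\<in>-{1..n}. {x. x k = 0})" unfolding Rn_def by auto
  then show ?thesis
    by (simp add: closed_INT closed_Collect_eq continuous_on_product_coordinates)
qed

lemma closed_level_points:
  assumes "n \<ge> 2"
  shows "closed {x \<in> Rn n. level n x}"
proof -
  let ?O = "{k \<in> {1..n}. odd k}" and ?E = "{k \<in> {1..n}. even k}"
  have "{x \<in> Rn n. level n x} = Rn n \<inter> (\<Inter>k\<in>?O. \<Inter>k'\<in>?E. {x. x k' \<le> x k})
      \<inter> (\<Union>k\<in>?O. \<Union>k'\<in>?E. {x. x k = x k'})"
    (is "_ = Rn n \<inter> ?below \<inter> ?touch")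
  proof (intro equalityI subsetI)
    fix x assume "x \<in> {x \<in> Rn n. level n x}"
    then have x: "x \<in> Rn n" and e: "level_at n x (eval_level n x)"
      using level_at_iff[OF assms] by auto
    then obtain k k' where "k \<in> ?O" "k' \<in> ?E" "x k = x k'"
      unfolding level_at_def by auto
    then have "x \<in> ?touch" by blast
    moreover have "x \<in> ?below"
      using level_at_odd_ge[OF e] level_at_even_le[OF e] order_trans by blast
    ultimately show "x \<in> Rn n \<inter> ?below \<inter> ?touch" using x by blast
  next
    fix x assume x: "x \<in> Rn n \<inter> ?below \<inter> ?touch"
    then obtain k k' where k: "k \<in> ?O" "k' \<in> ?E" "x k = x k'" by blast
    have "level_at n x (x k)"
      unfolding level_at_def
    proof (intro conjI ballI impI)
      show "\<exists>i\<in>{1..n}. \<exists>i'\<in>{1..n}. odd i \<and> even i' \<and> x i = x k \<and> x i' = x k"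
        using k by (intro bexI[of _ k] bexI[of _ k']) auto
      show "x k \<le> x i" if "i \<in> {1..n}" "odd i" for i
        using x k that unfolding \<open>x k = x k'\<close> by blast
      show "x i \<le> x k" if "i \<in> {1..n}" "even i" for i
        using x k that by blast
    qed
    then show "x \<in> {x \<in> Rn n. level n x}" using x level_at_iff[OF assms] by blast
  qed
  moreover have "closed ?below"
    by (intro closed_INT ballI closed_Collect_le continuous_on_product_coordinates)
  moreover have "closed ?touch"
    by (intro closed_UN ballI closed_Collect_eq continuous_on_product_coordinates) auto
  ultimately show ?thesis using closed_Rn by (simp add: closed_Int)
qed

lemma Lset_iff_has_type:
  assumes "n \<ge> 2" and "x \<in> Rn n" and "level_at n x e"
  shows "x \<in> Lset n s m \<longleftrightarrow> has_type n s m {k \<in> {1..n}. x k = e}"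
proof -
  have "level n x" "eval_level n x = e" using level_at_iff[OF assms(1)] assms(3) by auto
  then have "x \<in> Lset n s m \<longleftrightarrow> has_type n s m ({k. x k = e} \<inter> {1..n})"
    unfolding Lset_def of_type_iff_has_type using assms(2) has_type_restrict by simp
  moreover have "{k. x k = e} \<inter> {1..n} = {k \<in> {1..n}. x k = e}" by blast
  ultimately show ?thesis by simp
qed

lemma level_set_shrinks_nearby:
  assumes "level_at n y e"
  obtains N where "open N" "y \<in> N"
    "\<And>x e'. x \<in> N \<Longrightarrow> level_at n x e' \<Longrightarrow> {k \<in> {1..n}. x k = e'} \<subseteq> {k \<in> {1..n}. y k = e}"
proof -
  define \<delta> where "\<delta> = Min (insert 1 {\<bar>y k - e\<bar> | k. k \<in> {1..n} \<and> y k \<noteq> e})"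
  have fin: "finite (insert 1 {\<bar>y k - e\<bar> | k. k \<in> {1..n} \<and> y k \<noteq> e})"
    by simp
  have "\<delta> > 0" unfolding \<delta>_def using fin by (auto simp: Min_gr_iff)
  have gap: "\<delta> \<le> \<bar>y k - e\<bar>" if "k \<in> {1..n}" "y k \<noteq> e" for k
    unfolding \<delta>_def using fin that by (intro Min_le) auto
  txt \<open>On N the level e' of a level point x is within \<delta>/2 of e, while every coordinate of y
    off the level e is at distance at least \<delta> from it.\<close>
  define N where "N = (\<Inter>k\<in>{1..n}. {x. \<bar>x k - y k\<bar> < \<delta> / 2})"
  have "open N" unfolding N_def
    by (intro open_INT finite_atLeastAtMost ballI open_Collect_less continuous_intros
        continuous_on_product_coordinates)
  moreover have "y \<in> N" unfolding N_def using \<open>\<delta> > 0\<close> by simp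
  moreover have "y k = e" if x: "x \<in> N" "level_at n x e'" and k: "k \<in> {1..n}" "x k = e'" for x e' k
  proof (rule ccontr)
    assume "y k \<noteq> e"
    have close: "\<bar>x i - y i\<bar> < \<delta> / 2" if "i \<in> {1..n}" for i
      using x(1) that unfolding N_def by blast
    obtain k0 k0' where k0: "k0 \<in> {1..n}" "k0' \<in> {1..n}" "odd k0" "even k0'" "y k0 = e" "y k0' = e"
      using assms unfolding level_at_def by blast
    show False
    proof (cases "odd k")
      case True
      have "e \<le> y k" using level_at_odd_ge[OF assms k(1) True] by simp
      moreover have "e' \<le> x k0" using level_at_odd_ge[OF x(2) k0(1) k0(3)] .
      moreover have "\<delta> \<le> \<bar>y k - e\<bar>" "\<bar>x k - y k\<bar> < \<delta> / 2" "\<bar>x k0 - y k0\<bar> < \<delta> / 2"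
        using gap[OF k(1) \<open>y k \<noteq> e\<close>] close[OF k(1)] close[OF k0(1)] by auto
      ultimately show False using k0(5) k(2) by (simp add: abs_if split: if_splits)
    next
      case False
      then have "even k" by simp
      have "y k \<le> e" using level_at_even_le[OF assms k(1) \<open>even k\<close>] by simp
      moreover have "x k0' \<le> e'" using level_at_even_le[OF x(2) k0(2) k0(4)] .
      moreover have "\<delta> \<le> \<bar>y k - e\<bar>" "\<bar>x k - y k\<bar> < \<delta> / 2" "\<bar>x k0' - y k0'\<bar> < \<delta> / 2"
        using gap[OF k(1) \<open>y k \<noteq> e\<close>] close[OF k(1)] close[OF k0(2)] by auto
      ultimately show False using k0(6) k(2) by (simp add: abs_if split: if_splits)
    qed
  qed
  ultimately show ?thesis using that by blast
qed

lemma closure_Lset_subset: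
  assumes "n \<ge> 2" "m \<ge> 1" "s \<in> {1,-1}" and y: "y \<in> closure (Lset n s m)"
  shows "y \<in> Lset n s m \<or> (\<exists>s' m'. s' \<in> {1,-1} \<and> m' > m \<and> y \<in> Lset n s' m')"
proof -
  have "Lset n s m \<subseteq> {x \<in> Rn n. level n x}" unfolding Lset_def by blast
  then have "y \<in> {x \<in> Rn n. level n x}"
    using y closure_minimal[OF _ closed_level_points[OF assms(1)]] by blast
  then obtain e where yR: "y \<in> Rn n" and ye: "level_at n y e"
    using level_at_iff[OF assms(1)] by blast
  obtain N where "open N" "y \<in> N" and shrink:
    "\<And>x e'. x \<in> N \<Longrightarrow> level_at n x e' \<Longrightarrow> {k \<in> {1..n}. x k = e'} \<subseteq> {k \<in> {1..n}. y k = e}"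
    using level_set_shrinks_nearby[OF ye] by blast
  then obtain x where "x \<in> N" "x \<in> Lset n s m"
    using y open_Int_closure_eq_empty[of N "Lset n s m"] by blast
  then have xR: "x \<in> Rn n" and xe: "level_at n x (eval_level n x)"
    using level_at_iff[OF assms(1)] unfolding Lset_def by auto
  then have x_type: "has_type n s m {k \<in> {1..n}. x k = eval_level n x}"
    using Lset_iff_has_type[OF assms(1)] \<open>x \<in> Lset n s m\<close> by blast
  have "{k \<in> {1..n}. y k = e} \<noteq> {}" using ye unfolding level_at_def by blast
  then obtain s' m' where "s' \<in> {1,-1}" and y_type: "has_type n s' m' {k \<in> {1..n}. y k = e}"
    using has_type_exists[of "{k \<in> {1..n}. y k = e}" n] by blast
  moreover have "{k \<in> {1..n}. x k = eval_level n x} \<inter> {1..n} \<subseteq> {k \<in> {1..n}. y k = e}"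
    using shrink[OF \<open>x \<in> N\<close> xe] by blast
  then have "m < m' \<or> (m = m' \<and> s = s')"
    using has_type_mono[OF x_type y_type _ assms(2,3)] by blast
  moreover have "y \<in> Lset n s' m'" using Lset_iff_has_type[OF assms(1) yR ye] y_type by blast
  ultimately show ?thesis by blast
qed

definition push_off :: "nat \<Rightarrow> nat set \<Rightarrow> (nat \<Rightarrow> real) \<Rightarrow> real \<Rightarrow> nat \<Rightarrow> real" where
  "push_off n T y \<epsilon> k = y k + \<epsilon> * (if k \<in> {1..n} - T then (if odd k then 1 else -1) else 0)"

lemma continuous_push_off: "continuous_on S (push_off n T y)"
  unfolding push_off_def
  by (intro continuous_on_coordinatewise_then_product continuous_intros)

lemma push_off_level_at:
  assumes y: "y \<in> Rn n" "level_at n y e" and T: "T \<subseteq> {k \<in> {1..n}. y k = e}"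
    and odd_even: "\<exists>k\<in>T. odd k" "\<exists>k\<in>T. even k" and "\<epsilon> > 0"
  shows "push_off n T y \<epsilon> \<in> Rn n" "level_at n (push_off n T y \<epsilon>) e"
    "{k \<in> {1..n}. push_off n T y \<epsilon> k = e} = T"
proof -
  let ?x = "push_off n T y \<epsilon>"
  show "?x \<in> Rn n" using y(1) unfolding Rn_def push_off_def by auto
  have on_T: "?x k = e" if "k \<in> T" for k
    using that T unfolding push_off_def by auto
  have off_T: "(odd k \<longrightarrow> e < ?x k) \<and> (even k \<longrightarrow> ?x k < e)" if "k \<in> {1..n}" "k \<notin> T" for k
    using that \<open>\<epsilon> > 0\<close> level_at_odd_ge[OF y(2) that(1)] level_at_even_le[OF y(2) that(1)] unfolding push_off_def by auto
  show "level_at n ?x e"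
    unfolding level_at_def
  proof (intro conjI ballI impI)
    obtain k k' where "k \<in> T" "odd k" "k' \<in> T" "even k'" using odd_even by blast
    then show "\<exists>k\<in>{1..n}. \<exists>k'\<in>{1..n}. odd k \<and> even k' \<and> ?x k = e \<and> ?x k' = e"
      using T on_T by blast
    show "e \<le> ?x k" if "k \<in> {1..n}" "odd k" for k
      using that on_T off_T[of k] by (cases "k \<in> T") auto
    show "?x k \<le> e" if "k \<in> {1..n}" "even k" for k
      using that on_T off_T[of k] by (cases "k \<in> T") auto
  qed
  show "{k \<in> {1..n}. ?x k = e} = T"
    using T on_T off_T by fastforce
qed

lemma Lset_subset_closure:
  assumes "n \<ge> 2" "m \<ge> 2" "s \<in> {1,-1}" "s' \<in> {1,-1}" "m < m'"
  shows "Lset n s' m' \<subseteq> closure (Lset n s m)"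
proof
  fix y assume "y \<in> Lset n s' m'"
  then have yR: "y \<in> Rn n" and ye: "level_at n y (eval_level n y)"
    using level_at_iff[OF assms(1)] unfolding Lset_def by auto
  let ?Y = "{k \<in> {1..n}. y k = eval_level n y}"
  have "has_type n s' m' ?Y" using Lset_iff_has_type[OF assms(1) yR ye] \<open>y \<in> Lset n s' m'\<close> by blast
  moreover have "1 \<le> m" using assms(2) by simp
  ultimately obtain T where "T \<subseteq> ?Y \<inter> {1..n}" and T_type: "has_type n s m T"
    using has_type_coarsen[OF _ assms(3,4) _ assms(5)] by blast
  then have T: "T \<subseteq> ?Y" by blast
  have "\<exists>k\<in>T. odd k" "\<exists>k\<in>T. even k" using has_type_odd_even[OF T_type assms(2,3)] by auto
  note push = push_off_level_at[OF yR ye T this]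
  have "push_off n T y \<epsilon> \<in> Lset n s m" if "\<epsilon> > 0" for \<epsilon>
    using Lset_iff_has_type[OF assms(1) push(1,2)[OF that]] push(3)[OF that] T_type by simp
  then have "push_off n T y ` {0<..} \<subseteq> closure (Lset n s m)"
    using closure_subset by (auto simp: image_subset_iff)
  then have "push_off n T y ` closure {0<..} \<subseteq> closure (Lset n s m)"
    using image_closure_subset[OF continuous_push_off closed_closure] by blast
  moreover have "push_off n T y 0 \<in> push_off n T y ` closure {0<..}" by simp
  moreover have "push_off n T y 0 = y" unfolding push_off_def by simp
  ultimately show "y \<in> closure (Lset n s m)" by (simp add: subset_iff)
qed

lemma Lset_disjoint:
  assumes "m \<ge> 1"
  shows "Lset n 1 m \<inter> Lset n (-1) m = {}"
proof (intro equals0I)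
  fix x assume "x \<in> Lset n 1 m \<inter> Lset n (-1) m"
  then have "has_type n 1 m {k. x k = eval_level n x}" "has_type n (-1) m {k. x k = eval_level n x}"
    unfolding Lset_def of_type_iff_has_type by auto
  from has_type_mono[OF this _ assms] show False by auto
qed

lemma closure_Lset:
  assumes "n \<ge> 2" "m \<ge> 2" "s \<in> {1, -1}"
  shows "closure (Lset n s m) = Lset n s m \<union> (\<Union>{Lset n s' m' | s' m'. s' \<in> {1, -1} \<and> m' > m})"
    (is "_ = _ \<union> ?U")
proof
  show "closure (Lset n s m) \<subseteq> Lset n s m \<union> ?U"
  proof
    fix y assume "y \<in> closure (Lset n s m)"
    moreover have "m \<ge> 1" using \<open>m \<ge> 2\<close> by simp
    ultimately consider "y \<in> Lset n s m" | s' m' where "s' \<in> {1, -1}" "m < m'" "y \<in> Lset n s' m'"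
      using closure_Lset_subset[OF assms(1) _ assms(3)] by blast
    then show "y \<in> Lset n s m \<union> ?U"
    proof cases
      case 2
      then show ?thesis by (intro UnI2 UnionI[of "Lset n s' m'"]) auto
    qed simp
  qed
  have "X \<subseteq> closure (Lset n s m)"
    if "X \<in> {Lset n s' m' | s' m'. s' \<in> {1, -1} \<and> m' > m}" for X
    using that Lset_subset_closure[OF assms] by auto
  then show "Lset n s m \<union> ?U \<subseteq> closure (Lset n s m)"
    by (intro Un_least closure_subset Union_least)
qed

theorem lemma1p10:
  fixes n m :: nat and s :: int
  assumes "n \<ge> 2" and "m \<ge> 2" and "s \<in> {1, -1}"
  shows "closure (Lset n s m) =
           Lset n s m \<union> (\<Union>{Lset n s' m' | s' m'. s' \<in> {1, -1} \<and> m' > m}) \<and>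
         closure (Lset n 1 m) \<inter> closure (Lset n (-1) m) =
           (\<Union>{Lset n s' m' | s' m'. s' \<in> {1, -1} \<and> m' > m})"
proof -
  let ?U = "\<Union>{Lset n s' m' | s' m'. s' \<in> {1, -1} \<and> m' > m}"
  have "closure (Lset n 1 m) \<inter> closure (Lset n (-1) m) = (Lset n 1 m \<inter> Lset n (-1) m) \<union> ?U"
    using closure_Lset[OF assms(1,2), of 1] closure_Lset[OF assms(1,2), of "-1"]
    by (simp add: Un_Int_distrib2)
  then show ?thesis
    using closure_Lset[OF assms] Lset_disjoint[of m n] \<open>m \<ge> 2\<close> by simp
qed

end
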